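(* Let $(X,\mathcal{A})$ be a measurable space, $f,g\in\mathcal{F}^{(X,\mathcal{A})}$ comonotone, $\otimes:[0,\infty]^2\to[0,\infty]$ a pseudo-multiplication with neutral element $e\in(0,\infty]$, and $m\in\mathcal{M}^{(X,\mathcal{A})}$ a monotone measure with $a\otimes m(X)\le a$ for all $a\in[0,\infty]$. Let $U_0,U_1,U_2:[0,\infty)\to[0,\infty)$ be continuous strictly increasing with $\mathbf{I}_\otimes(m,U_1(f))<\infty$ and $\mathbf{I}_\otimes(m,U_2(g))<\infty$. Let $\star:[0,\infty)^2\to[0,\infty)$ be continuous and non-decreasing in both arguments and $\psi:[0,\infty)\to[0,\infty)$ continuous and strictly increasing. If for all $a,b\in[0,\infty)$, $c\in[0,\infty]$, \[ U_0^{-1}\big[U_0(\psi(a)\star\psi(b))\otimes c\big]\ \ge\ \big[\psi\big(U_1^{-1}[U_1(a)\otimes c]\big)\star\psi(b)\big]\vee\big[\psi(a)\star\psi\big(U_2^{-1}[U_2(b)\otimes c]\big)\big], \] then \[ U_0^{-1}\big[\mathbf{I}_\otimes\big(m,U_0[\psi(f)\star\psi(g)]\big)\big]\ \ge\ \psi\big(U_1^{-1}(\mathbf{I}_\otimes(m,U_1(f)))\big)\star\psi\big(U_2^{-1}(\mathbf{I}_\otimes(m,U_2(g)))\big). \]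
   Context: A monotone measure on $(X,\mathcal{A})$ is $m:\mathcal{A}\to[0,\infty]$ with $m(\emptyset)=0$, $m(X)>0$, $m(A)\le m(B)$ for $A\subseteq B$; $\mathcal{M}^{(X,\mathcal{A})}$ is the set of these; $\mathcal{F}^{(X,\mathcal{A})}$ the set of $\mathcal{A}$-measurable $f:X\to[0,\infty]$. A pseudo-multiplication is $\otimes:[0,\infty]^2\to[0,\infty]$, non-decreasing in each component, with annihilator $0$ and a neutral element $e\in(0,\infty]$. $\mathbf{I}_\otimes(m,f)=\sup\{t\otimes m(\{f\ge t\}) : t\in(0,\infty]\}$. $f,g$ are comonotone if $(f(x)-f(y))(g(x)-g(y))\ge0$ for all $x,y$. Operations on functions are pointwise. *)

theory Defs
  imports "HOL-Analysis.Analysis"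
begin

definition monotone_measure :: "'a measure \<Rightarrow> ('a set \<Rightarrow> ennreal) \<Rightarrow> bool" where
  "monotone_measure M m \<longleftrightarrow>
     m {} = 0 \<and> m (space M) > 0 \<and>
     (\<forall>A\<in>sets M. \<forall>B\<in>sets M. A \<subseteq> B \<longrightarrow> m A \<le> m B)"

definition pseudo_mult :: "(ennreal \<Rightarrow> ennreal \<Rightarrow> ennreal) \<Rightarrow> ennreal \<Rightarrow> bool" where
  "pseudo_mult pm e \<longleftrightarrow>
     (\<forall>x y z. x \<le> y \<longrightarrow> pm x z \<le> pm y z) \<and>
     (\<forall>x y z. x \<le> y \<longrightarrow> pm z x \<le> pm z y) \<and>
     (\<forall>x. pm 0 x = 0 \<and> pm x 0 = 0) \<and>
     0 < e \<and> (\<forall>x. pm e x = x \<and> pm x e = x)"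

definition gen_sugeno ::
  "'a measure \<Rightarrow> (ennreal \<Rightarrow> ennreal \<Rightarrow> ennreal) \<Rightarrow> ('a set \<Rightarrow> ennreal) \<Rightarrow> ('a \<Rightarrow> ennreal) \<Rightarrow> ennreal" where
  "gen_sugeno M pm m f = (SUP t\<in>{0<..}. pm t (m {x\<in>space M. t \<le> f x}))"

definition comonotone :: "'a measure \<Rightarrow> ('a \<Rightarrow> real) \<Rightarrow> ('a \<Rightarrow> real) \<Rightarrow> bool" where
  "comonotone M f g \<longleftrightarrow>
     (\<forall>x\<in>space M. \<forall>y\<in>space M. (f x - f y) * (g x - g y) \<ge> 0)"

text \<open>Inverse of a continuous strictly increasing U : [0,infinity) -> [0,infinity),
  extended to arguments in [0,infinity] as the generalized inverse
  sup{x >= 0 . U x <= y}; on the range of U it is the ordinary inverse.\<close>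
definition ginv :: "(real \<Rightarrow> real) \<Rightarrow> ennreal \<Rightarrow> ennreal" where
  "ginv U y = (SUP x\<in>{x. 0 \<le> x \<and> ennreal (U x) \<le> y}. ennreal x)"

definition cont_strict_incr :: "(real \<Rightarrow> real) \<Rightarrow> bool" where
  "cont_strict_incr U \<longleftrightarrow>
     continuous_on {0..} U \<and> strict_mono_on {0..} U \<and> (\<forall>x\<ge>0. U x \<ge> 0)"

end

theory Submission
  imports Defs
begin

text \<open>
  Write \<open>\<Phi>(a, b) = \<psi>(a) \<star> \<psi>(b)\<close>. By comonotonicity the level sets \<open>{f \<ge> a'}\<close> and
  \<open>{g \<ge> b'}\<close> are nested, so the smaller of them, \<open>E\<close>, lies in \<open>{\<Phi>(f, g) \<ge> \<Phi>(a', b')}\<close>.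
  Hence \<open>I(m, U\<^sub>0 \<Phi>(f, g)) \<ge> U\<^sub>0(\<Phi>(a', b')) \<otimes> m(E)\<close>, and the hypothesis with \<open>c = m(E)\<close>
  bounds \<open>U\<^sub>0\<^sup>-\<^sup>1\<close> of the right-hand side from below by \<open>\<Phi>(a, b)\<close> whenever \<open>a\<close> is realized
  by a level set of \<open>f\<close>, i.e. \<open>U\<^sub>1(a) \<le> U\<^sub>1(a') \<otimes> m({f \<ge> a'})\<close> for some \<open>a' \<ge> a\<close>, and
  likewise \<open>b\<close> for \<open>g\<close>. Every \<open>a\<close> strictly below \<open>U\<^sub>1\<^sup>-\<^sup>1(I(m, U\<^sub>1 f))\<close> is realized
  (here \<open>a \<otimes> m(X) \<le> a\<close> rules out thresholds under \<open>U\<^sub>1(0)\<close>), and continuity of \<open>\<Phi>\<close>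
  passes to the limit.
\<close>

lemma cont_strict_incr_le_iff:
  assumes "cont_strict_incr U" "0 \<le> x" "0 \<le> y"
  shows "U x \<le> U y \<longleftrightarrow> x \<le> y"
  using assms unfolding cont_strict_incr_def strict_mono_on_def
  by (metis atLeast_iff linorder_not_le order_less_imp_le order.strict_iff_order)

lemma cont_strict_incr_less_iff:
  assumes "cont_strict_incr U" "0 \<le> x" "0 \<le> y"
  shows "U x < U y \<longleftrightarrow> x < y"
  using cont_strict_incr_le_iff[OF assms(1,3,2)] by (simp add: not_le[symmetric])

lemma cont_strict_incr_nonneg: "cont_strict_incr U \<Longrightarrow> 0 \<le> x \<Longrightarrow> 0 \<le> U x"
  by (simp add: cont_strict_incr_def)

lemma ginv_mono: "y \<le> z \<Longrightarrow> ginv U y \<le> ginv U z"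
  unfolding ginv_def by (rule SUP_subset_mono) auto

lemma ennreal_le_ginv: "0 \<le> x \<Longrightarrow> ennreal (U x) \<le> y \<Longrightarrow> ennreal x \<le> ginv U y"
  unfolding ginv_def by (rule SUP_upper) auto

lemma ginv_le_ennreal:
  assumes U: "cont_strict_incr U" and a: "0 \<le> a" and y: "y \<le> ennreal (U a)"
  shows "ginv U y \<le> ennreal a"
  unfolding ginv_def
proof (rule SUP_least)
  fix x assume "x \<in> {x. 0 \<le> x \<and> ennreal (U x) \<le> y}"
  then have "0 \<le> x" "ennreal (U x) \<le> ennreal (U a)" using y by auto
  then show "ennreal x \<le> ennreal a"
    using cont_strict_incr_le_iff[OF U _ a] cont_strict_incr_nonneg[OF U a]
    by (auto simp: ennreal_le_iff intro: ennreal_leI)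
qed

lemma le_enn2real_ginv:
  assumes U: "cont_strict_incr U" and "0 \<le> a" "0 \<le> a'"
    and "ennreal (U a) \<le> y" "y \<le> ennreal (U a')"
  shows "a \<le> enn2real (ginv U y)" and "a \<le> a'"
proof -
  have "ennreal a \<le> ginv U y" "ginv U y \<le> ennreal a'"
    using assms ennreal_le_ginv ginv_le_ennreal by blast+
  then show "a \<le> enn2real (ginv U y)"
    using \<open>0 \<le> a\<close> by (metis enn2real_ennreal enn2real_mono ennreal_less_top le_less_trans)
  show "a \<le> a'"
    using \<open>ennreal a \<le> ginv U y\<close> \<open>ginv U y \<le> ennreal a'\<close> \<open>0 \<le> a'\<close>
    by (metis ennreal_le_iff order_trans)
qed

lemma pseudo_mult_mono_right: "pseudo_mult pm e \<Longrightarrow> x \<le> y \<Longrightarrow> pm z x \<le> pm z y"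
  by (simp add: pseudo_mult_def)

lemma pseudo_mult_zero_left: "pseudo_mult pm e \<Longrightarrow> pm 0 x = 0"
  by (simp add: pseudo_mult_def)

lemma pseudo_mult_zero_right: "pseudo_mult pm e \<Longrightarrow> pm x 0 = 0"
  by (simp add: pseudo_mult_def)

lemma monotone_measure_mono:
  "monotone_measure M m \<Longrightarrow> A \<in> sets M \<Longrightarrow> B \<in> sets M \<Longrightarrow> A \<subseteq> B \<Longrightarrow> m A \<le> m B"
  by (simp add: monotone_measure_def)

lemma pseudo_mult_measure_le:
  assumes "pseudo_mult pm e" "monotone_measure M m" "\<forall>a. pm a (m (space M)) \<le> a" "E \<in> sets M"
  shows "pm c (m E) \<le> c"
  using assms pseudo_mult_mono_right monotone_measure_mono sets.sets_into_space sets.top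
  by (metis order_trans)

lemma gen_sugeno_ge:
  assumes pm: "pseudo_mult pm e" and mm: "monotone_measure M m"
    and h: "h \<in> borel_measurable M" and S: "S \<in> sets M" "S \<subseteq> {x\<in>space M. t \<le> h x}"
  shows "pm t (m S) \<le> gen_sugeno M pm m h"
proof (cases "t = 0")
  case True
  then show ?thesis using pseudo_mult_zero_left[OF pm] by simp
next
  case False
  have "{x\<in>space M. t \<le> h x} \<in> sets M" using h by measurable
  then have "pm t (m S) \<le> pm t (m {x\<in>space M. t \<le> h x})"
    using pseudo_mult_mono_right[OF pm] monotone_measure_mono[OF mm] S by blast
  also have "\<dots> \<le> gen_sugeno M pm m h"
    unfolding gen_sugeno_def by (rule SUP_upper) (use False in \<open>auto simp: zero_less_iff_neq_zero\<close>)
  finally show ?thesis .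
qed

lemma level_set_witness:
  assumes U: "cont_strict_incr U" and f_nonneg: "\<forall>x\<in>space M. 0 \<le> f x"
    and pm: "pseudo_mult pm e" and mm: "monotone_measure M m"
    and mX: "\<forall>a. pm a (m (space M)) \<le> a" and a: "0 \<le> a"
    and less: "ennreal (U a) < gen_sugeno M pm m (\<lambda>x. ennreal (U (f x)))"
  obtains a' where "0 \<le> a'" "ennreal (U a) < pm (ennreal (U a')) (m {x\<in>space M. a' \<le> f x})"
proof -
  obtain t where "0 < t" and t: "ennreal (U a) < pm t (m {x\<in>space M. t \<le> ennreal (U (f x))})"
    using less unfolding gen_sugeno_def less_SUP_iff by auto
  define L where "L = {x\<in>space M. t \<le> ennreal (U (f x))}"
  have "L \<noteq> {}"
  proof
    assume "L = {}"
    then have "pm t (m L) = 0"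
      using mm pseudo_mult_zero_right[OF pm] by (simp add: monotone_measure_def)
    with t show False unfolding L_def by simp
  qed
  then obtain y where y: "y \<in> space M" "t \<le> ennreal (U (f y))" unfolding L_def by auto
  then obtain t' where t': "t = ennreal t'" "0 \<le> t'"
    by (cases t) (auto simp: top_unique)
  have fy: "0 \<le> f y" using f_nonneg y by auto
  have "U 0 \<le> t'"
  proof (rule ccontr)
    \<comment> \<open>below \<open>U 0\<close> the level set is all of \<open>X\<close>, where \<open>a \<otimes> m(X) \<le> a\<close> contradicts \<open>t\<close>\<close>
    assume "\<not> U 0 \<le> t'"
    then have t'_le: "t' \<le> U z" if "0 \<le> z" for z
      using cont_strict_incr_le_iff[OF U order.refl that] that by auto
    then have "L = space M"
      using f_nonneg t' by (auto simp: L_def intro: ennreal_leI)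
    then have "pm t (m L) \<le> t" using mX by simp
    also have "t \<le> ennreal (U a)" using t' t'_le[OF a] by (simp add: ennreal_leI)
    finally have "pm t (m L) \<le> ennreal (U a)" .
    then show False using t unfolding L_def by simp
  qed
  moreover have "t' \<le> U (f y)"
    using y(2) t' cont_strict_incr_nonneg[OF U fy] by (simp add: ennreal_le_iff)
  moreover have "continuous_on {0..f y} U"
    using U unfolding cont_strict_incr_def by (auto intro: continuous_on_subset)
  ultimately obtain a' where a': "0 \<le> a'" "U a' = t'"
    using IVT'[of U 0 t' "f y"] fy by auto
  have "L = {x\<in>space M. a' \<le> f x}"
    using cont_strict_incr_le_iff[OF U a'(1)] cont_strict_incr_nonneg[OF U] f_nonneg a' t'
    by (auto simp: L_def ennreal_le_iff)
  then show ?thesis using that a' t t' unfolding L_def by metis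
qed

lemma ginv_gen_sugeno_level_approx:
  assumes U: "cont_strict_incr U"
    and f_meas: "f \<in> borel_measurable M" and f_nonneg: "\<forall>x\<in>space M. 0 \<le> f x"
    and pm: "pseudo_mult pm e" and mm: "monotone_measure M m"
    and mX: "\<forall>a. pm a (m (space M)) \<le> a" and a: "0 \<le> a"
    and less: "a < enn2real (ginv U (gen_sugeno M pm m (\<lambda>x. ennreal (U (f x))))) \<or> a = 0"
  obtains a' where "0 \<le> a'" "a \<le> a'"
    "a \<le> enn2real (ginv U (pm (ennreal (U a')) (m {x\<in>space M. a' \<le> f x})))"
proof (cases "a = 0")
  case True
  then show ?thesis using that[of 0] by simp
next
  case False
  define A where "A = gen_sugeno M pm m (\<lambda>x. ennreal (U (f x)))"
  have "a < enn2real (ginv U A)" using less False unfolding A_def by simp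
  then have "ginv U A \<noteq> top" using a by auto
  then have "ennreal a < ginv U A"
    using \<open>a < enn2real (ginv U A)\<close> a
    by (metis ennreal_enn2real_if ennreal_less_iff enn2real_nonneg)
  then obtain x where x: "0 \<le> x" "ennreal (U x) \<le> A" "a < x"
    using a unfolding ginv_def less_SUP_iff by (auto simp: ennreal_less_iff)
  have "ennreal (U a) < ennreal (U x)"
    using cont_strict_incr_less_iff[OF U a x(1)] cont_strict_incr_nonneg[OF U a] x(3)
    by (simp add: ennreal_less_iff)
  then have "ennreal (U a) < A" using x(2) by (rule less_le_trans)
  then obtain a' where a': "0 \<le> a'"
      and level: "ennreal (U a) < pm (ennreal (U a')) (m {x\<in>space M. a' \<le> f x})"
    using level_set_witness[OF U f_nonneg pm mm mX a] unfolding A_def by blast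
  have "{x\<in>space M. a' \<le> f x} \<in> sets M" using f_meas by measurable
  then have "pm (ennreal (U a')) (m {x\<in>space M. a' \<le> f x}) \<le> ennreal (U a')"
    by (rule pseudo_mult_measure_le[OF pm mm mX])
  then show ?thesis
    using that a' le_enn2real_ginv[OF U a a'(1) less_imp_le[OF level]] by blast
qed

lemma comonotone_level_sets_nested:
  assumes "comonotone M f g"
  shows "{x\<in>space M. a \<le> f x} \<subseteq> {x\<in>space M. b \<le> g x} \<or>
         {x\<in>space M. b \<le> g x} \<subseteq> {x\<in>space M. a \<le> f x}"
proof (rule ccontr)
  assume "\<not> ?thesis"
  then obtain x y where "x \<in> space M" "y \<in> space M"
    and "a \<le> f x" "\<not> b \<le> g x" "b \<le> g y" "\<not> a \<le> f y"
    by auto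
  moreover have "(f x - f y) * (g x - g y) \<ge> 0"
    using assms calculation unfolding comonotone_def by auto
  ultimately show False by (smt (verit) mult_pos_neg)
qed

lemma le_of_scaled_le:
  fixes \<Phi> :: "real \<Rightarrow> real \<Rightarrow> real"
  assumes cont: "continuous_on ({0..} \<times> {0..}) (\<lambda>(a, b). \<Phi> a b)"
    and "0 \<le> a" "0 \<le> b"
    and below: "\<And>q. 0 \<le> q \<Longrightarrow> q < 1 \<Longrightarrow> ennreal (\<Phi> (q * a) (q * b)) \<le> G"
  shows "ennreal (\<Phi> a b) \<le> G"
proof -
  define q where "q n = real n / real (Suc n)" for n
  have q: "0 \<le> q n" "q n < 1" for n by (auto simp: q_def)
  have "(\<lambda>n. (q n * a, q n * b)) \<longlonglongrightarrow> (1 * a, 1 * b)"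
    unfolding q_def by (intro tendsto_intros LIMSEQ_n_over_Suc_n)
  then have "(\<lambda>n. (\<lambda>(a, b). \<Phi> a b) (q n * a, q n * b)) \<longlonglongrightarrow> (\<lambda>(a, b). \<Phi> a b) (a, b)"
    by (intro continuous_on_tendsto_compose[OF cont]) (use assms q in auto)
  then have "(\<lambda>n. ennreal (\<Phi> (q n * a) (q n * b))) \<longlonglongrightarrow> ennreal (\<Phi> a b)"
    by (auto intro: tendsto_ennrealI)
  then show ?thesis
    by (rule LIMSEQ_le_const2) (use below q in blast)
qed

lemma borel_measurable_continuous_on_nonneg_Pair:
  fixes f g :: "'a \<Rightarrow> real" and \<Phi> :: "real \<Rightarrow> real \<Rightarrow> real"
  assumes "f \<in> borel_measurable M" "\<forall>x\<in>space M. 0 \<le> f x"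
    and "g \<in> borel_measurable M" "\<forall>x\<in>space M. 0 \<le> g x"
    and cont: "continuous_on ({0..} \<times> {0..}) (\<lambda>(a, b). \<Phi> a b)"
  shows "(\<lambda>x. \<Phi> (f x) (g x)) \<in> borel_measurable M"
proof -
  have "continuous_on UNIV (\<lambda>p::real \<times> real. (max 0 (fst p), max 0 (snd p)))"
    by (intro continuous_intros)
  then have "continuous_on UNIV (\<lambda>p::real \<times> real. (\<lambda>(a, b). \<Phi> a b) (max 0 (fst p), max 0 (snd p)))"
    by (rule continuous_on_compose2[OF cont]) auto
  then have "(\<lambda>x. \<Phi> (max 0 (f x)) (max 0 (g x))) \<in> borel_measurable M"
    using borel_measurable_continuous_Pair[OF assms(1,3)] by simp
  then show ?thesis
    by (rule measurable_cong[THEN iffD1, rotated]) (use assms in auto)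
qed

lemma ginv_gen_sugeno_ge_on_level_sets:
  fixes \<Phi> :: "real \<Rightarrow> real \<Rightarrow> real"
  assumes pm: "pseudo_mult pm e" and mm: "monotone_measure M m" and U0: "cont_strict_incr U0"
    and \<Phi>_mono: "\<And>a b a' b'. 0 \<le> a \<Longrightarrow> 0 \<le> b \<Longrightarrow> a \<le> a' \<Longrightarrow> b \<le> b' \<Longrightarrow> \<Phi> a b \<le> \<Phi> a' b'"
    and \<Phi>_nonneg: "\<And>a b. 0 \<le> a \<Longrightarrow> 0 \<le> b \<Longrightarrow> 0 \<le> \<Phi> a b"
    and f_nonneg: "\<forall>x\<in>space M. 0 \<le> f x" and g_nonneg: "\<forall>x\<in>space M. 0 \<le> g x"
    and h_meas: "(\<lambda>x. U0 (\<Phi> (f x) (g x))) \<in> borel_measurable M"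
    and a': "0 \<le> a'" and b': "0 \<le> b'" and S: "S \<in> sets M"
    and "S \<subseteq> {x\<in>space M. a' \<le> f x}" "S \<subseteq> {x\<in>space M. b' \<le> g x}"
  shows "ginv U0 (pm (ennreal (U0 (\<Phi> a' b'))) (m S))
       \<le> ginv U0 (gen_sugeno M pm m (\<lambda>x. ennreal (U0 (\<Phi> (f x) (g x)))))"
proof (rule ginv_mono, rule gen_sugeno_ge[OF pm mm _ S])
  show "S \<subseteq> {x\<in>space M. ennreal (U0 (\<Phi> a' b')) \<le> ennreal (U0 (\<Phi> (f x) (g x)))}"
  proof
    fix x assume "x \<in> S"
    then have x: "x \<in> space M" "a' \<le> f x" "b' \<le> g x" using assms by auto
    then have "U0 (\<Phi> a' b') \<le> U0 (\<Phi> (f x) (g x))"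
      using cont_strict_incr_le_iff[OF U0] \<Phi>_mono[OF a' b'] \<Phi>_nonneg a' b'
        f_nonneg g_nonneg by auto
    then show "x \<in> {x\<in>space M. ennreal (U0 (\<Phi> a' b')) \<le> ennreal (U0 (\<Phi> (f x) (g x)))}"
      using x by (simp add: ennreal_leI)
  qed
qed (use h_meas in simp)

theorem chebyshev_gen_sugeno:
  fixes \<Phi> :: "real \<Rightarrow> real \<Rightarrow> real"
  assumes f_meas: "f \<in> borel_measurable M" and f_nonneg: "\<forall>x\<in>space M. 0 \<le> f x"
    and g_meas: "g \<in> borel_measurable M" and g_nonneg: "\<forall>x\<in>space M. 0 \<le> g x"
    and comono: "comonotone M f g"
    and pm: "pseudo_mult pm e" and mm: "monotone_measure M m"
    and mX: "\<forall>a. pm a (m (space M)) \<le> a"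
    and U0: "cont_strict_incr U0" and U1: "cont_strict_incr U1" and U2: "cont_strict_incr U2"
    and \<Phi>_cont: "continuous_on ({0..} \<times> {0..}) (\<lambda>(a, b). \<Phi> a b)"
    and \<Phi>_mono: "\<And>a b a' b'. 0 \<le> a \<Longrightarrow> 0 \<le> b \<Longrightarrow> a \<le> a' \<Longrightarrow> b \<le> b' \<Longrightarrow> \<Phi> a b \<le> \<Phi> a' b'"
    and \<Phi>_nonneg: "\<And>a b. 0 \<le> a \<Longrightarrow> 0 \<le> b \<Longrightarrow> 0 \<le> \<Phi> a b"
    and cond: "\<And>a b c. 0 \<le> a \<Longrightarrow> 0 \<le> b \<Longrightarrow>
       ennreal (max (\<Phi> (enn2real (ginv U1 (pm (ennreal (U1 a)) c))) b)
                    (\<Phi> a (enn2real (ginv U2 (pm (ennreal (U2 b)) c)))))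
       \<le> ginv U0 (pm (ennreal (U0 (\<Phi> a b))) c)"
  shows "ennreal (\<Phi> (enn2real (ginv U1 (gen_sugeno M pm m (\<lambda>x. ennreal (U1 (f x))))))
                    (enn2real (ginv U2 (gen_sugeno M pm m (\<lambda>x. ennreal (U2 (g x)))))))
       \<le> ginv U0 (gen_sugeno M pm m (\<lambda>x. ennreal (U0 (\<Phi> (f x) (g x)))))"
    (is "ennreal (\<Phi> ?a ?b) \<le> ?G")
proof (rule le_of_scaled_le[OF \<Phi>_cont])
  note [measurable] = f_meas g_meas
  have "continuous_on ({0..} \<times> {0..}) (\<lambda>p. U0 ((\<lambda>(a, b). \<Phi> a b) p))"
    by (rule continuous_on_compose2[OF _ \<Phi>_cont])
      (use U0 \<Phi>_nonneg in \<open>auto simp: cont_strict_incr_def\<close>)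
  then have "continuous_on ({0..} \<times> {0..}) (\<lambda>(a, b). U0 (\<Phi> a b))"
    by (simp add: case_prod_unfold)
  then have h_meas: "(\<lambda>x. U0 (\<Phi> (f x) (g x))) \<in> borel_measurable M"
    by (rule borel_measurable_continuous_on_nonneg_Pair[OF f_meas f_nonneg g_meas g_nonneg])
  have on_level_sets: "ginv U0 (pm (ennreal (U0 (\<Phi> a' b'))) (m S)) \<le> ?G"
    if "0 \<le> a'" "0 \<le> b'" "S \<in> sets M"
      "S \<subseteq> {x\<in>space M. a' \<le> f x}" "S \<subseteq> {x\<in>space M. b' \<le> g x}" for a' b' S
    by (rule ginv_gen_sugeno_ge_on_level_sets[OF pm mm U0 _ _ f_nonneg g_nonneg h_meas that])
      (use \<Phi>_mono \<Phi>_nonneg in blast)+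
  show "0 \<le> ?a" "0 \<le> ?b" by simp_all
  fix q :: real assume q: "0 \<le> q" "q < 1"
  have "q * x < x \<or> q * x = 0" if "0 \<le> x" for x :: real
    using q that by (cases "x = 0") (auto simp: mult_less_cancel_right2)
  then have less: "q * ?a < ?a \<or> q * ?a = 0" "q * ?b < ?b \<or> q * ?b = 0"
    by simp_all
  obtain a' where a': "0 \<le> a'" "q * ?a \<le> a'"
      "q * ?a \<le> enn2real (ginv U1 (pm (ennreal (U1 a')) (m {x\<in>space M. a' \<le> f x})))"
    by (rule ginv_gen_sugeno_level_approx[OF U1 f_meas f_nonneg pm mm mX _ less(1)])
      (use q in simp)
  obtain b' where b': "0 \<le> b'" "q * ?b \<le> b'"
      "q * ?b \<le> enn2real (ginv U2 (pm (ennreal (U2 b')) (m {x\<in>space M. b' \<le> g x})))"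
    by (rule ginv_gen_sugeno_level_approx[OF U2 g_meas g_nonneg pm mm mX _ less(2)])
      (use q in simp)
  define E where "E = {x\<in>space M. a' \<le> f x}"
  define F where "F = {x\<in>space M. b' \<le> g x}"
  have "E \<in> sets M" "F \<in> sets M" unfolding E_def F_def by measurable
  have q_nonneg: "0 \<le> q * ?a" "0 \<le> q * ?b" using q by simp_all
  consider "E \<subseteq> F" | "F \<subseteq> E"
    using comonotone_level_sets_nested[OF comono] unfolding E_def F_def by blast
  then show "ennreal (\<Phi> (q * ?a) (q * ?b)) \<le> ?G"
  proof cases
    case 1
    have "\<Phi> (q * ?a) (q * ?b) \<le> \<Phi> (enn2real (ginv U1 (pm (ennreal (U1 a')) (m E)))) b'"
      using \<Phi>_mono q_nonneg a' b' unfolding E_def by blast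
    also have "ennreal \<dots> \<le> ginv U0 (pm (ennreal (U0 (\<Phi> a' b'))) (m E))"
      using cond[OF a'(1) b'(1)] by (meson ennreal_leI max.cobounded1 order_trans)
    also have "\<dots> \<le> ?G"
      using on_level_sets[OF a'(1) b'(1) \<open>E \<in> sets M\<close>] 1 unfolding E_def F_def by blast
    finally show ?thesis by (simp add: ennreal_leI)
  next
    case 2
    have "\<Phi> (q * ?a) (q * ?b) \<le> \<Phi> a' (enn2real (ginv U2 (pm (ennreal (U2 b')) (m F))))"
      using \<Phi>_mono q_nonneg a' b' unfolding F_def by blast
    also have "ennreal \<dots> \<le> ginv U0 (pm (ennreal (U0 (\<Phi> a' b'))) (m F))"
      using cond[OF a'(1) b'(1)] by (meson ennreal_leI max.cobounded2 order_trans)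
    also have "\<dots> \<le> ?G"
      using on_level_sets[OF a'(1) b'(1) \<open>F \<in> sets M\<close>] 2 unfolding E_def F_def by blast
    finally show ?thesis by (simp add: ennreal_leI)
  qed
qed

theorem corollary3p1:
  fixes M :: "'a measure"
    and f g :: "'a \<Rightarrow> real"
    and pm :: "ennreal \<Rightarrow> ennreal \<Rightarrow> ennreal"
    and e :: ennreal
    and m :: "'a set \<Rightarrow> ennreal"
    and U0 U1 U2 \<psi> :: "real \<Rightarrow> real"
    and star :: "real \<Rightarrow> real \<Rightarrow> real"
  assumes f_meas: "f \<in> borel_measurable M" and f_nonneg: "\<forall>x\<in>space M. f x \<ge> 0"
    and g_meas: "g \<in> borel_measurable M" and g_nonneg: "\<forall>x\<in>space M. g x \<ge> 0"
    and comono: "comonotone M f g"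
    and pm: "pseudo_mult pm e"
    and mm: "monotone_measure M m"
    and mX: "\<forall>a. pm a (m (space M)) \<le> a"
    and U0: "cont_strict_incr U0" and U1: "cont_strict_incr U1" and U2: "cont_strict_incr U2"
    and fin1: "gen_sugeno M pm m (\<lambda>x. ennreal (U1 (f x))) < \<infinity>"
    and fin2: "gen_sugeno M pm m (\<lambda>x. ennreal (U2 (g x))) < \<infinity>"
    and star_cont: "continuous_on ({0..} \<times> {0..}) (\<lambda>(a, b). star a b)"
    and star_mono1: "\<forall>a a' b. 0 \<le> a \<longrightarrow> a \<le> a' \<longrightarrow> 0 \<le> b \<longrightarrow> star a b \<le> star a' b"
    and star_mono2: "\<forall>a b b'. 0 \<le> a \<longrightarrow> 0 \<le> b \<longrightarrow> b \<le> b' \<longrightarrow> star a b \<le> star a b'"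
    and star_nonneg: "\<forall>a b. 0 \<le> a \<longrightarrow> 0 \<le> b \<longrightarrow> 0 \<le> star a b"
    and psi: "cont_strict_incr \<psi>"
    and cond: "\<forall>a b c. 0 \<le> a \<longrightarrow> 0 \<le> b \<longrightarrow>
       ginv U0 (pm (ennreal (U0 (star (\<psi> a) (\<psi> b)))) c)
       \<ge> ennreal (max (star (\<psi> (enn2real (ginv U1 (pm (ennreal (U1 a)) c)))) (\<psi> b))
                       (star (\<psi> a) (\<psi> (enn2real (ginv U2 (pm (ennreal (U2 b)) c))))))"
  shows "ginv U0 (gen_sugeno M pm m (\<lambda>x. ennreal (U0 (star (\<psi> (f x)) (\<psi> (g x))))))
       \<ge> ennreal (star (\<psi> (enn2real (ginv U1 (gen_sugeno M pm m (\<lambda>x. ennreal (U1 (f x)))))))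
                       (\<psi> (enn2real (ginv U2 (gen_sugeno M pm m (\<lambda>x. ennreal (U2 (g x))))))))"
proof -
  have \<psi>_cont: "continuous_on {0..} \<psi>" and \<psi>_nonneg: "\<And>a. 0 \<le> a \<Longrightarrow> 0 \<le> \<psi> a"
    using psi by (simp_all add: cont_strict_incr_def)
  have "continuous_on ({0..} \<times> {0..}) (\<lambda>p. (\<lambda>(a, b). star a b) (\<psi> (fst p), \<psi> (snd p)))"
    by (rule continuous_on_compose2[OF star_cont])
      (auto intro!: continuous_intros continuous_on_compose2[OF \<psi>_cont] simp: \<psi>_nonneg)
  then have cont: "continuous_on ({0..} \<times> {0..}) (\<lambda>(a, b). star (\<psi> a) (\<psi> b))"
    by (simp add: case_prod_unfold)
  have mono: "star (\<psi> a) (\<psi> b) \<le> star (\<psi> a') (\<psi> b')"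
    if "0 \<le> a" "0 \<le> b" "a \<le> a'" "b \<le> b'" for a b a' b'
  proof -
    have "\<psi> a \<le> \<psi> a'" "\<psi> b \<le> \<psi> b'"
      using that cont_strict_incr_le_iff[OF psi] by auto
    then show ?thesis
      using star_mono1 star_mono2 \<psi>_nonneg that by (meson order_trans)
  qed
  show ?thesis
    by (rule chebyshev_gen_sugeno[OF f_meas f_nonneg g_meas g_nonneg comono pm mm mX U0 U1 U2
          cont mono]) (use star_nonneg \<psi>_nonneg cond in auto)
qed

end
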